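(* Let $\theta>1$, $r\in(\theta^{-1},\theta^{-1/2}]$ and \[ \beta^*:=\frac{1-r^2\theta}{r\theta}\max\Big(\frac{1}{1-r},\frac{1}{r\theta-1}\Big). \] Let $\mathsf{A}$ be any deterministic online algorithm for one-max search with predictions having robustness $r$ and consistency $\frac1{r\theta}$, and suppose there is $\beta\ge0$ such that for all $n\ge1$, all $p\in[1,\theta]^n$ with maximum $p^*$ and all $y\in[1,\theta]$, \[ \frac{\mathsf{A}(p,y)}{p^*}\ge\max\Big(r,\ \frac1{r\theta}-\beta\,\frac{|p^*-y|}{p^*}\Big). \] Then $\beta\ge\beta^*$. Moreover, the algorithm $\mathsf{A}^1_r$ satisfies this inequality (for all $n,p,y$) with $\beta=\beta^*$.
   Context: One-max search: fix $\theta>1$. An instance is a sequence of prices $p=(p_1,\dots,p_n)\in[1,\theta]^n$, revealed one at a time; the algorithm receives at the start a prediction $y\in[1,\theta]$ of $p^*:=\max_ip_i$. At each step it irrevocably accepts the current price (payoff = that price) or rejects it; if nothing is accepted by step $n$ the payoff is $1$. Consistency: $\inf_p \mathsf{A}(p,p^* )/p^*$; robustness: $\inf_{p,y}\mathsf{A}(p,y)/p^*$. For $\Phi:[1,\theta]\to[1,\theta]$, the threshold algorithm $\mathsf{A}_\Phi$ accepts the first $p_i$ with $p_i\ge\Phi(y)$. Let $\varphi_r(z)=\frac{r\theta-1}{1-r}+\frac{1-r^2\theta}{1-r}\cdot\frac{z}{r\theta}$ and $\Phi^1_r(z)=\max(r\theta,\varphi_r(z))$; $\mathsf{A}^1_r:=\mathsf{A}_{\Phi^1_r}$.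 *)

theory Defs
  imports Complex_Main
begin

text \<open>A deterministic online algorithm with prediction: given the prediction y and the
history of prices revealed so far (the last list element is the current price),
it decides whether to accept the current price.\<close>
type_synonym algorithm = "real \<Rightarrow> real list \<Rightarrow> bool"

fun run :: "algorithm \<Rightarrow> real \<Rightarrow> real list \<Rightarrow> real list \<Rightarrow> real" where
  "run A y hist [] = 1"
| "run A y hist (x # xs) = (if A y (hist @ [x]) then x else run A y (hist @ [x]) xs)"

definition payoff :: "algorithm \<Rightarrow> real \<Rightarrow> real list \<Rightarrow> real" where
  "payoff A y p = run A y [] p"

definition valid_instance :: "real \<Rightarrow> real list \<Rightarrow> bool" where
  "valid_instance \<theta> p \<longleftrightarrow> p \<noteq> [] \<and> (\<forall>x\<in>set p. 1 \<le> x \<and> x \<le> \<theta>)"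

definition pmax :: "real list \<Rightarrow> real" where
  "pmax p = Max (set p)"

definition has_robustness :: "real \<Rightarrow> algorithm \<Rightarrow> real \<Rightarrow> bool" where
  "has_robustness \<theta> A c \<longleftrightarrow>
     (\<forall>p y. valid_instance \<theta> p \<and> 1 \<le> y \<and> y \<le> \<theta> \<longrightarrow> payoff A y p / pmax p \<ge> c)"

definition has_consistency :: "real \<Rightarrow> algorithm \<Rightarrow> real \<Rightarrow> bool" where
  "has_consistency \<theta> A c \<longleftrightarrow>
     (\<forall>p. valid_instance \<theta> p \<longrightarrow> payoff A (pmax p) p / pmax p \<ge> c)"

definition satisfies_bound :: "real \<Rightarrow> real \<Rightarrow> real \<Rightarrow> algorithm \<Rightarrow> bool" where
  "satisfies_bound \<theta> r \<beta> A \<longleftrightarrow>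
     (\<forall>p y. valid_instance \<theta> p \<and> 1 \<le> y \<and> y \<le> \<theta> \<longrightarrow>
        payoff A y p / pmax p \<ge> max r (1 / (r * \<theta>) - \<beta> * \<bar>pmax p - y\<bar> / pmax p))"

definition threshold_alg :: "(real \<Rightarrow> real) \<Rightarrow> algorithm" where
  "threshold_alg \<Phi> y hist \<longleftrightarrow> last hist \<ge> \<Phi> y"

definition phi_r :: "real \<Rightarrow> real \<Rightarrow> real \<Rightarrow> real" where
  "phi_r \<theta> r z = (r * \<theta> - 1) / (1 - r) + (1 - r\<^sup>2 * \<theta>) / (1 - r) * (z / (r * \<theta>))"

definition Phi1 :: "real \<Rightarrow> real \<Rightarrow> real \<Rightarrow> real" where
  "Phi1 \<theta> r z = max (r * \<theta>) (phi_r \<theta> r z)"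

definition A1 :: "real \<Rightarrow> real \<Rightarrow> algorithm" where
  "A1 \<theta> r = threshold_alg (Phi1 \<theta> r)"

definition beta_star :: "real \<Rightarrow> real \<Rightarrow> real" where
  "beta_star \<theta> r = (1 - r\<^sup>2 * \<theta>) / (r * \<theta>) * max (1 / (1 - r)) (1 / (r * \<theta> - 1))"

end

theory Submission
  imports Defs
begin

text \<open>
  Lower bound: two adversaries play against a consistent algorithm.  If \<open>r\<theta> < y\<close>, consistency on
  the single price \<open>y\<close> forces the algorithm to accept \<open>y\<close> when \<open>y\<close> is predicted; appending the price
  \<open>\<theta>\<close> then gives \<open>1/r - y \<le> \<beta> (\<theta> - y)\<close>.  If \<open>x < 1/r\<close>, consistency on \<open>[x, \<theta>]\<close> forces it to
  reject \<open>x\<close> when \<open>\<theta>\<close> is predicted; stopping after \<open>x\<close> gives \<open>x/(r\<theta>) - 1 \<le> \<beta> (\<theta> - x)\<close>.  Letting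
  \<open>y \<down> r\<theta>\<close> and \<open>x \<up> 1/r\<close> yields the two quotients whose maximum is \<open>\<beta>\<^sup>*\<close>.

  Upper bound: with \<open>P\<close> the maximum price, the payoff must be at least \<open>rP\<close> and at least the
  target \<open>P/(r\<theta>) - \<beta> \<bar>P - y\<bar>\<close>.  Here \<open>\<phi>\<^sub>r\<close> is the line through \<open>(r\<theta>, r\<theta>)\<close> and \<open>(\<theta>, 1/r)\<close>,
  whose slope is the first quotient, and \<open>\<phi>\<^sub>r y\<close> is exactly the price at which the second
  adversary's bound becomes tight.  If the threshold algorithm accepts, it earns at least the
  threshold, which dominates the target; if it accepts nothing, \<open>P\<close> lies below the threshold,
  where the target is at most 1.
\<close>

lemma mult_le_max_0:
  fixes b s t :: "'a :: linordered_idom"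
  assumes "0 \<le> t" "t \<le> s"
  shows "b * t \<le> max 0 (b * s)"
proof (cases "0 \<le> b")
  case True
  then show ?thesis using assms(2) by (simp add: mult_left_mono le_max_iff_disj)
next
  case False
  then show ?thesis using assms(1) by (simp add: mult_nonpos_nonneg le_max_iff_disj)
qed

lemma valid_instance_pmax:
  assumes "valid_instance \<theta> p"
  shows "1 \<le> pmax p" "pmax p \<le> \<theta>"
  using assms Max_in[of "set p"] unfolding valid_instance_def pmax_def by auto

lemma run_threshold_alg:
  "(run (threshold_alg \<Phi>) y hist p = 1 \<and> (\<forall>x\<in>set p. x < \<Phi> y)) \<or>
   (run (threshold_alg \<Phi>) y hist p \<in> set p \<and> \<Phi> y \<le> run (threshold_alg \<Phi>) y hist p)"
  by (induction p arbitrary: hist) (auto simp: threshold_alg_def)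

lemma payoff_threshold_alg:
  assumes "p \<noteq> []"
  shows "(payoff (threshold_alg \<Phi>) y p = 1 \<and> pmax p < \<Phi> y) \<or>
         (\<Phi> y \<le> payoff (threshold_alg \<Phi>) y p \<and> payoff (threshold_alg \<Phi>) y p \<le> pmax p)"
  using run_threshold_alg[of \<Phi> y "[]" p] assms unfolding payoff_def pmax_def by auto

lemma consistent_accepts_above_r_theta:
  assumes "has_consistency \<theta> A (1 / (r * \<theta>))" "1 \<le> r * \<theta>" "r * \<theta> < y" "y \<le> \<theta>"
  shows "A y [y]"
proof (rule ccontr)
  assume "\<not> A y [y]"
  then have "payoff A (pmax [y]) [y] = 1" by (simp add: payoff_def pmax_def)
  moreover have "valid_instance \<theta> [y]" using assms by (simp add: valid_instance_def)
  ultimately have "1 / (r * \<theta>) \<le> 1 / y"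
    using assms(1) unfolding has_consistency_def by (fastforce simp: pmax_def)
  with assms(2,3) show False by (simp add: divide_le_eq)
qed

lemma consistent_rejects_below_inverse_r:
  assumes "has_consistency \<theta> A (1 / (r * \<theta>))" "0 < \<theta>" "1 \<le> x" "x < 1 / r" "x \<le> \<theta>"
  shows "\<not> A \<theta> [x]"
proof
  assume "A \<theta> [x]"
  then have "payoff A (pmax [x, \<theta>]) [x, \<theta>] = x" using assms(5) by (simp add: payoff_def pmax_def)
  moreover have "valid_instance \<theta> [x, \<theta>]" using assms by (simp add: valid_instance_def)
  ultimately have "1 / (r * \<theta>) \<le> x / \<theta>"
    using assms(1,5) unfolding has_consistency_def by (fastforce simp: pmax_def)
  with assms show False by (simp add: field_simps)
qed

lemma satisfies_bound_after_accept:
  assumes "satisfies_bound \<theta> r \<beta> A" "A y [y]" "1 \<le> y" "y \<le> \<theta>" "0 < r"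
  shows "1 / r - y \<le> \<beta> * (\<theta> - y)"
proof -
  have "valid_instance \<theta> [y, \<theta>]" using assms by (simp add: valid_instance_def)
  moreover have "payoff A y [y, \<theta>] = y" "pmax [y, \<theta>] = \<theta>"
    using assms(2,4) by (simp_all add: payoff_def pmax_def)
  ultimately have "(1 / r - \<beta> * (\<theta> - y)) / \<theta> \<le> y / \<theta>"
    using assms(1)[unfolded satisfies_bound_def, rule_format, of "[y, \<theta>]" y] assms(3,4)
    by (simp add: diff_divide_distrib)
  with assms(3,4) show ?thesis by (simp add: divide_le_cancel)
qed

lemma satisfies_bound_after_reject:
  assumes "satisfies_bound \<theta> r \<beta> A" "\<not> A \<theta> [x]" "1 \<le> x" "x \<le> \<theta>"
  shows "x / (r * \<theta>) - 1 \<le> \<beta> * (\<theta> - x)"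
proof -
  have "valid_instance \<theta> [x]" using assms by (simp add: valid_instance_def)
  moreover have "payoff A \<theta> [x] = 1" "pmax [x] = x"
    using assms(2) by (simp_all add: payoff_def pmax_def)
  ultimately have "(x / (r * \<theta>) - \<beta> * (\<theta> - x)) / x \<le> 1 / x"
    using assms(1)[unfolded satisfies_bound_def, rule_format, of "[x]" \<theta>] assms(3,4)
    by (simp add: diff_divide_distrib)
  with assms(3) show ?thesis by (simp add: divide_le_cancel)
qed

text \<open>The limits of \<open>(1/r - y) / (\<theta> - y)\<close> as \<open>y \<down> r\<theta>\<close> and of \<open>(x/(r\<theta>) - 1) / (\<theta> - x)\<close> as \<open>x \<up> 1/r\<close>.\<close>

definition beta_accept :: "real \<Rightarrow> real \<Rightarrow> real" where
  "beta_accept \<theta> r = (1 / r - r * \<theta>) / (\<theta> - r * \<theta>)"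

definition beta_reject :: "real \<Rightarrow> real \<Rightarrow> real" where
  "beta_reject \<theta> r = (1 / (r\<^sup>2 * \<theta>) - 1) / (\<theta> - 1 / r)"

locale one_max_regime =
  fixes \<theta> r :: real
  assumes one_lt_theta: "1 < \<theta>"
    and one_lt_r_theta: "1 < r * \<theta>"
    and r2_theta_le_1: "r\<^sup>2 * \<theta> \<le> 1"

lemma one_max_regimeI:
  assumes "1 < \<theta>" "1 / \<theta> < r" "r \<le> 1 / sqrt \<theta>"
  shows "one_max_regime \<theta> r"
proof
  show "1 < \<theta>" by fact
  show "1 < r * \<theta>" using assms(1,2) by (simp add: field_simps)
  have "0 \<le> r" using assms(1,2) by (smt (verit) divide_pos_pos)
  with assms(3) have "r\<^sup>2 \<le> (1 / sqrt \<theta>)\<^sup>2" by (rule power_mono)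
  then have "r\<^sup>2 \<le> 1 / \<theta>" using assms(1) by (simp add: power_divide)
  then show "r\<^sup>2 * \<theta> \<le> 1" using assms(1) by (simp add: field_simps)
qed

context one_max_regime
begin

lemma r_pos: "0 < r"
  using zero_less_mult_pos2[of r \<theta>] one_lt_theta one_lt_r_theta by simp

lemma r_lt_1: "r < 1"
  using one_lt_r_theta r2_theta_le_1 r_pos
  by (smt (verit) mult_less_cancel_left1 power2_eq_square mult.assoc)

lemma r_theta_le_inverse_r: "r * \<theta> \<le> 1 / r"
  using r2_theta_le_1 r_pos by (simp add: field_simps power2_eq_square)

lemma inverse_r_lt_theta: "1 / r < \<theta>"
  using one_lt_r_theta r_pos by (simp add: field_simps)

lemma beta_accept_eq: "beta_accept \<theta> r = (1 - r\<^sup>2 * \<theta>) / (r * \<theta> * (1 - r))"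
  using r_pos r_lt_1 one_lt_theta by (simp add: beta_accept_def field_simps power2_eq_square)

lemma beta_reject_eq: "beta_reject \<theta> r = (1 - r\<^sup>2 * \<theta>) / (r * \<theta> * (r * \<theta> - 1))"
  using r_pos one_lt_theta one_lt_r_theta
  by (simp add: beta_reject_def field_simps power2_eq_square)

lemma beta_star_eq_max: "beta_star \<theta> r = max (beta_accept \<theta> r) (beta_reject \<theta> r)"
proof -
  have "0 \<le> (1 - r\<^sup>2 * \<theta>) / (r * \<theta>)"
    using r2_theta_le_1 one_lt_r_theta by simp
  then show ?thesis
    unfolding beta_star_def beta_accept_eq beta_reject_eq by (simp add: max_mult_distrib_left)
qed

lemma beta_accept_nonneg: "0 \<le> beta_accept \<theta> r"
  using r_theta_le_inverse_r r_lt_1 one_lt_theta by (simp add: beta_accept_def)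

lemma beta_accept_le_inverse_r_theta: "beta_accept \<theta> r \<le> 1 / (r * \<theta>)"
  using r_pos r_lt_1 one_lt_theta one_lt_r_theta
  by (simp add: beta_accept_def field_simps power2_eq_square)

lemma beta_reject_nonneg: "0 \<le> beta_reject \<theta> r"
  using r2_theta_le_1 r_pos one_lt_theta inverse_r_lt_theta by (simp add: beta_reject_def)

lemma beta_accept_le:
  assumes "has_consistency \<theta> A (1 / (r * \<theta>))" "satisfies_bound \<theta> r \<beta> A"
  shows "beta_accept \<theta> r \<le> \<beta>"
proof -
  have "r * \<theta> < \<theta>" using r_lt_1 one_lt_theta by simp
  have "1 / r - y \<le> \<beta> * (\<theta> - y)" if "y \<in> {r * \<theta><..<\<theta>}" for y
    using that one_lt_r_theta r_pos
    by (intro satisfies_bound_after_accept[OF assms(2)] consistent_accepts_above_r_theta[OF assms(1)])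
      auto
  with eventually_at_right_real[OF \<open>r * \<theta> < \<theta>\<close>]
  have "\<forall>\<^sub>F y in at_right (r * \<theta>). 1 / r - y \<le> \<beta> * (\<theta> - y)"
    by (rule eventually_mono)
  then have "1 / r - r * \<theta> \<le> \<beta> * (\<theta> - r * \<theta>)"
    by (rule tendsto_le[OF trivial_limit_at_right_real, rotated 2]) (auto intro!: tendsto_eq_intros)
  with \<open>r * \<theta> < \<theta>\<close> show ?thesis by (simp add: beta_accept_def divide_le_eq)
qed

lemma beta_reject_le:
  assumes "has_consistency \<theta> A (1 / (r * \<theta>))" "satisfies_bound \<theta> r \<beta> A"
  shows "beta_reject \<theta> r \<le> \<beta>"
proof -
  have "1 < 1 / r" using r_pos r_lt_1 by simp
  have "x / (r * \<theta>) - 1 \<le> \<beta> * (\<theta> - x)" if "x \<in> {1<..<1 / r}" for x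
    using that inverse_r_lt_theta one_lt_theta
    by (intro satisfies_bound_after_reject[OF assms(2)] consistent_rejects_below_inverse_r[OF assms(1)])
      auto
  with eventually_at_left_real[OF \<open>1 < 1 / r\<close>]
  have "\<forall>\<^sub>F x in at_left (1 / r). x / (r * \<theta>) - 1 \<le> \<beta> * (\<theta> - x)"
    by (rule eventually_mono)
  then have "1 / r / (r * \<theta>) - 1 \<le> \<beta> * (\<theta> - 1 / r)"
    by (rule tendsto_le[OF trivial_limit_at_left_real, rotated 2])
      (use r_pos one_lt_theta in \<open>auto intro!: tendsto_eq_intros\<close>)
  with inverse_r_lt_theta show ?thesis
    by (simp add: beta_reject_def divide_le_eq power2_eq_square)
qed

lemma phi_r_through_r_theta: "phi_r \<theta> r z = r * \<theta> + beta_accept \<theta> r * (z - r * \<theta>)"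
proof -
  obtain q where q: "q = 1 - r" "q \<noteq> 0" using r_lt_1 by auto
  have "r \<noteq> 0" "\<theta> \<noteq> 0" using r_pos one_lt_theta by auto
  with q(2) show ?thesis
    unfolding phi_r_def beta_accept_eq q(1)[symmetric]
    by (simp add: field_simps) (use q(1) in algebra)
qed

lemma phi_r_through_theta: "phi_r \<theta> r z = 1 / r - beta_accept \<theta> r * (\<theta> - z)"
proof -
  have "beta_accept \<theta> r * (\<theta> - r * \<theta>) = 1 / r - r * \<theta>"
    using r_lt_1 one_lt_theta by (simp add: beta_accept_def)
  then show ?thesis unfolding phi_r_through_r_theta by algebra
qed

lemma phi_r_reject_identity:
  "phi_r \<theta> r y / (r * \<theta>) - beta_reject \<theta> r * (y - phi_r \<theta> r y) = 1"
proof -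
  obtain q where q: "q = 1 - r" "q \<noteq> 0" using r_lt_1 by auto
  have "r * \<theta> - 1 \<noteq> 0" "r \<noteq> 0" "\<theta> \<noteq> 0" using one_lt_r_theta r_pos one_lt_theta by auto
  with q(2) show ?thesis
    unfolding phi_r_def beta_reject_eq q(1)[symmetric]
    by (simp add: field_simps) (use q(1) in algebra)
qed

lemma phi_r_ge_target_at_prediction:
  assumes "y \<le> \<theta>"
  shows "y / (r * \<theta>) \<le> phi_r \<theta> r y"
proof -
  have "phi_r \<theta> r y - y / (r * \<theta>) = (\<theta> - y) * (1 / (r * \<theta>) - beta_accept \<theta> r)"
    using r_pos one_lt_theta by (simp add: phi_r_through_theta field_simps)
  moreover have "0 \<le> (\<theta> - y) * (1 / (r * \<theta>) - beta_accept \<theta> r)"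
    using assms beta_accept_le_inverse_r_theta by simp
  ultimately show ?thesis by simp
qed

lemma Phi1_le_inverse_r:
  assumes "y \<le> \<theta>"
  shows "Phi1 \<theta> r y \<le> 1 / r"
  using r_theta_le_inverse_r beta_accept_nonneg assms
  by (simp add: Phi1_def phi_r_through_theta)

lemma target_le_1_below_Phi1:
  assumes "beta_star \<theta> r \<le> \<beta>" "P < Phi1 \<theta> r y"
  shows "P / (r * \<theta>) - \<beta> * \<bar>P - y\<bar> \<le> 1"
proof (cases "P \<le> r * \<theta>")
  case True
  have "0 \<le> \<beta> * \<bar>P - y\<bar>" using assms(1) beta_reject_nonneg by (simp add: beta_star_eq_max)
  moreover have "P / (r * \<theta>) \<le> 1" using True one_lt_r_theta by simp
  ultimately show ?thesis by linarith
next
  case False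
  let ?\<phi> = "phi_r \<theta> r y" and ?d = "beta_reject \<theta> r"
  have P_lt: "P < ?\<phi>" and r_theta_lt: "r * \<theta> < ?\<phi>"
    using False assms(2) by (auto simp: Phi1_def)
  have "0 < beta_accept \<theta> r * (y - r * \<theta>)"
    using r_theta_lt by (simp add: phi_r_through_r_theta)
  then have "r * \<theta> < y"
    using beta_accept_nonneg by (simp add: zero_less_mult_iff)
  moreover have "beta_accept \<theta> r \<le> 1"
    using beta_accept_le_inverse_r_theta one_lt_r_theta by (simp add: order_trans)
  ultimately have "beta_accept \<theta> r * (y - r * \<theta>) \<le> y - r * \<theta>"
    using beta_accept_nonneg by (intro mult_left_le_one_le) auto
  then have "?\<phi> \<le> y" unfolding phi_r_through_r_theta by simp
  have "P / (r * \<theta>) - \<beta> * \<bar>P - y\<bar> \<le> P / (r * \<theta>) - ?d * (y - P)"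
    using assms(1) P_lt \<open>?\<phi> \<le> y\<close> by (simp add: beta_star_eq_max mult_right_mono)
  also have "\<dots> \<le> ?\<phi> / (r * \<theta>) - ?d * (y - ?\<phi>)"
    using P_lt one_lt_r_theta beta_reject_nonneg
    by (intro diff_mono divide_right_mono mult_left_mono) auto
  also have "\<dots> = 1" by (rule phi_r_reject_identity)
  finally show ?thesis .
qed

lemma target_le_Phi1:
  assumes "beta_star \<theta> r \<le> \<beta>" "y \<le> \<theta>" "P \<le> \<theta>"
  shows "P / (r * \<theta>) - \<beta> * \<bar>P - y\<bar> \<le> Phi1 \<theta> r y"
proof -
  have "P / (r * \<theta>) - \<beta> * \<bar>P - y\<bar> \<le> phi_r \<theta> r y"
  proof (cases "P \<le> y")
    case True
    have "0 \<le> \<beta> * \<bar>P - y\<bar>" using assms(1) beta_reject_nonneg by (simp add: beta_star_eq_max)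
    moreover have "P / (r * \<theta>) \<le> y / (r * \<theta>)"
      using True one_lt_r_theta by (simp add: divide_right_mono)
    ultimately show ?thesis using phi_r_ge_target_at_prediction[OF assms(2)] by linarith
  next
    case False
    have "P / (r * \<theta>) - \<beta> * \<bar>P - y\<bar> = y / (r * \<theta>) + (1 / (r * \<theta>) - \<beta>) * (P - y)"
      using False r_pos one_lt_theta by (simp add: field_simps)
    also have "\<dots> \<le> y / (r * \<theta>) + max 0 ((1 / (r * \<theta>) - \<beta>) * (\<theta> - y))"
      using False assms(3) by (simp add: mult_le_max_0)
    also have "\<dots> = max (y / (r * \<theta>)) (1 / r - \<beta> * (\<theta> - y))"
    proof -
      have "y / (r * \<theta>) + (1 / (r * \<theta>) - \<beta>) * (\<theta> - y) = 1 / r - \<beta> * (\<theta> - y)"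
        using r_pos one_lt_theta by (simp add: field_simps)
      then show ?thesis by (simp add: max_add_distrib_right)
    qed
    also have "\<dots> \<le> phi_r \<theta> r y"
    proof (rule max.boundedI)
      show "y / (r * \<theta>) \<le> phi_r \<theta> r y" using assms(2) by (rule phi_r_ge_target_at_prediction)
      have "beta_accept \<theta> r * (\<theta> - y) \<le> \<beta> * (\<theta> - y)"
        using assms(1,2) by (simp add: beta_star_eq_max mult_right_mono)
      then show "1 / r - \<beta> * (\<theta> - y) \<le> phi_r \<theta> r y" by (simp add: phi_r_through_theta)
    qed
    finally show ?thesis .
  qed
  then show ?thesis by (simp add: Phi1_def)
qed

lemma A1_satisfies_bound:
  assumes "beta_star \<theta> r \<le> \<beta>"
  shows "satisfies_bound \<theta> r \<beta> (A1 \<theta> r)"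
  unfolding satisfies_bound_def
proof (intro allI impI, elim conjE)
  fix p y assume p: "valid_instance \<theta> p" and y: "1 \<le> y" "y \<le> \<theta>"
  define P a where "P = pmax p" and "a = payoff (A1 \<theta> r) y p"
  have P: "1 \<le> P" "P \<le> \<theta>" using valid_instance_pmax[OF p] by (simp_all add: P_def)
  have "p \<noteq> []" using p by (simp add: valid_instance_def)
  then have "(a = 1 \<and> P < Phi1 \<theta> r y) \<or> (Phi1 \<theta> r y \<le> a \<and> a \<le> P)"
    unfolding P_def a_def A1_def by (rule payoff_threshold_alg)
  then have "r * P \<le> a \<and> P / (r * \<theta>) - \<beta> * \<bar>P - y\<bar> \<le> a"
  proof (elim conjE disjE)
    assume "a = 1" "P < Phi1 \<theta> r y"
    then have "r * P < r * Phi1 \<theta> r y" using r_pos by simp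
    also have "\<dots> \<le> 1" using Phi1_le_inverse_r[OF y(2)] r_pos by (simp add: field_simps)
    finally show ?thesis using \<open>a = 1\<close> target_le_1_below_Phi1[OF assms \<open>P < Phi1 \<theta> r y\<close>] by simp
  next
    assume "Phi1 \<theta> r y \<le> a"
    moreover have "r * P \<le> Phi1 \<theta> r y" using P r_pos by (simp add: Phi1_def le_max_iff_disj)
    ultimately show ?thesis using target_le_Phi1[OF assms y(2) P(2)] by linarith
  qed
  moreover have "1 / (r * \<theta>) - \<beta> * \<bar>P - y\<bar> / P = (P / (r * \<theta>) - \<beta> * \<bar>P - y\<bar>) / P"
    using P(1) by (simp add: diff_divide_distrib)
  ultimately have "r \<le> a / P" "1 / (r * \<theta>) - \<beta> * \<bar>P - y\<bar> / P \<le> a / P"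
    using P(1) by (simp_all add: pos_le_divide_eq divide_right_mono)
  then show "max r (1 / (r * \<theta>) - \<beta> * \<bar>pmax p - y\<bar> / pmax p) \<le> payoff (A1 \<theta> r) y p / pmax p"
    by (simp add: P_def a_def)
qed

end

theorem theorem4:
  fixes \<theta> r :: real
  assumes "\<theta> > 1" and "1 / \<theta> < r" and "r \<le> 1 / sqrt \<theta>"
  shows "(\<forall>(A :: algorithm) (\<beta> :: real).
            has_robustness \<theta> A r \<and> has_consistency \<theta> A (1 / (r * \<theta>)) \<and>
            \<beta> \<ge> 0 \<and> satisfies_bound \<theta> r \<beta> A \<longrightarrow> \<beta> \<ge> beta_star \<theta> r)
         \<and> satisfies_bound \<theta> r (beta_star \<theta> r) (A1 \<theta> r)"
proof -
  interpret one_max_regime \<theta> r using assms by (rule one_max_regimeI)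
  show ?thesis
    using beta_accept_le beta_reject_le A1_satisfies_bound by (auto simp: beta_star_eq_max)
qed

end
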